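(* Let $G$ be a finite simple graph without isolated vertices. Then Dom has a winning strategy in the Bicolored Domination Game on $G$, both when Dom makes the first move and when Sepy makes the first move.
   Context: For a vertex $v$ of a graph $G$, $N[v]$ denotes its closed neighborhood. The Bicolored Domination Game on an isolate-free graph $G$ is played by two players, Dom and Sepy, who alternately color vertices; Dom may only use the color $p$ (purple) and Sepy may only use the color $b$ (blue). At any stage $V_p$ and $V_b$ denote the sets of vertices colored $p$ and $b$. A player whose color is $c$ makes a move by choosing a vertex $v$ such that (i) $v$ is not yet colored, and (ii) there exists $u\in N[v]$ with $N[u]\cap V_c=\emptyset$ (evaluated before the move); then $v$ receives color $c$. The game terminates as soon as one of the following holds: (s* ) some vertex $v$ has $N[v]\subseteq V_p$ or $N[v]\subseteq V_b$ — then Sepy wins; (d** ) for some color $c\in\{p,b\}$, $V_c$ dominates all vertices of $G$ and no vertex $v$ satisfies $N[v]\subseteq V_c$ — then Dom wins. *)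

theory Defs
  imports Main
begin

text \<open>Simple graph: vertex set V, adjacency E (symmetric, irreflexive, edges inside V).\<close>

definition cnbhd :: "'a set \<Rightarrow> ('a \<Rightarrow> 'a \<Rightarrow> bool) \<Rightarrow> 'a \<Rightarrow> 'a set" where
  "cnbhd V E v = {u \<in> V. u = v \<or> E v u}"

text \<open>Legal move for the player whose colour class is C (current classes P, B):
  v uncoloured and some u in N[v] has N[u] disjoint from C.\<close>
definition legal_move :: "'a set \<Rightarrow> ('a \<Rightarrow> 'a \<Rightarrow> bool) \<Rightarrow> 'a set \<Rightarrow> 'a set \<Rightarrow> 'a set \<Rightarrow> 'a \<Rightarrow> bool" where
  "legal_move V E P B C v \<longleftrightarrow> v \<in> V \<and> v \<notin> P \<and> v \<notin> B \<and>
     (\<exists>u \<in> cnbhd V E v. cnbhd V E u \<inter> C = {})"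

definition sepy_cond :: "'a set \<Rightarrow> ('a \<Rightarrow> 'a \<Rightarrow> bool) \<Rightarrow> 'a set \<Rightarrow> 'a set \<Rightarrow> bool" where
  "sepy_cond V E P B \<longleftrightarrow> (\<exists>v \<in> V. cnbhd V E v \<subseteq> P \<or> cnbhd V E v \<subseteq> B)"

definition dom_cond1 :: "'a set \<Rightarrow> ('a \<Rightarrow> 'a \<Rightarrow> bool) \<Rightarrow> 'a set \<Rightarrow> bool" where
  "dom_cond1 V E C \<longleftrightarrow> (\<forall>v \<in> V. cnbhd V E v \<inter> C \<noteq> {}) \<and> \<not> (\<exists>v \<in> V. cnbhd V E v \<subseteq> C)"

definition dom_cond :: "'a set \<Rightarrow> ('a \<Rightarrow> 'a \<Rightarrow> bool) \<Rightarrow> 'a set \<Rightarrow> 'a set \<Rightarrow> bool" where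
  "dom_cond V E P B \<longleftrightarrow> dom_cond1 V E P \<or> dom_cond1 V E B"

text \<open>dom_forces V E d P B: from the position with purple set P, blue set B and
  Dom to move iff d, Dom can force a win (in finitely many moves).
  Sepy-win condition (s*) takes precedence; a player with no legal move in a
  non-terminal position is counted as a Dom failure (never happens in real play).\<close>
inductive dom_forces :: "'a set \<Rightarrow> ('a \<Rightarrow> 'a \<Rightarrow> bool) \<Rightarrow> bool \<Rightarrow> 'a set \<Rightarrow> 'a set \<Rightarrow> bool"
  for V E where
  terminal: "\<not> sepy_cond V E P B \<Longrightarrow> dom_cond V E P B \<Longrightarrow> dom_forces V E d P B"
| dom_move: "\<not> sepy_cond V E P B \<Longrightarrow> \<not> dom_cond V E P B \<Longrightarrow> legal_move V E P B P v
     \<Longrightarrow> dom_forces V E False (insert v P) B \<Longrightarrow> dom_forces V E True P B"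
| sepy_move: "\<not> sepy_cond V E P B \<Longrightarrow> \<not> dom_cond V E P B \<Longrightarrow> (\<exists>v. legal_move V E P B B v)
     \<Longrightarrow> (\<forall>v. legal_move V E P B B v \<longrightarrow> dom_forces V E True P (insert v B))
     \<Longrightarrow> dom_forces V E False P B"

end

theory Submission
  imports Defs
begin

text \<open>Dom fixes a maximum matching and keeps an invariant under which no closed
  neighbourhood can become monochromatic: no matching edge is entirely purple, every unmatched
  purple vertex has a blue neighbour, and a blue vertex is already dominated by purple unless its
  matching partner is purple. As long as (d**) fails, Dom either answers Sepy at the partner of
  Sepy's vertex or colours a vertex next to a vertex not yet dominated by purple; that these moves
  preserve the invariant is exactly the absence of augmenting paths of length one and three.
  Every move colours a new vertex, so the game ends, and by the invariant it ends with (d**).\<close>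

lemma sepy_cond_mono:
  "sepy_cond V E P B \<Longrightarrow> P \<subseteq> P' \<Longrightarrow> B \<subseteq> B' \<Longrightarrow> sepy_cond V E P' B'"
  by (auto simp: sepy_cond_def)

locale finite_graph =
  fixes V :: "'a set" and E :: "'a \<Rightarrow> 'a \<Rightarrow> bool"
  assumes finite_V: "finite V"
    and edge_in_V: "\<And>u v. E u v \<Longrightarrow> u \<in> V \<and> v \<in> V"
    and edge_sym: "\<And>u v. E u v \<Longrightarrow> E v u"
    and edge_irrefl: "\<And>v. \<not> E v v"
begin

lemma self_in_cnbhd: "v \<in> V \<Longrightarrow> v \<in> cnbhd V E v"
  by (simp add: cnbhd_def)

lemma nbr_in_cnbhd: "E v w \<Longrightarrow> w \<in> cnbhd V E v"
  using edge_in_V by (simp add: cnbhd_def)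

lemma cnbhd_sym: "u \<in> cnbhd V E v \<Longrightarrow> v \<in> V \<Longrightarrow> v \<in> cnbhd V E u"
  using edge_sym by (auto simp: cnbhd_def)

definition dominated :: "'a set \<Rightarrow> 'a \<Rightarrow> bool" where
  "dominated C v \<longleftrightarrow> cnbhd V E v \<inter> C \<noteq> {}"

lemma dominated_if_edge: "E v w \<Longrightarrow> w \<in> C \<Longrightarrow> dominated C v"
  using nbr_in_cnbhd by (auto simp: dominated_def)

lemma dominated_insert: "dominated C v \<Longrightarrow> dominated (insert y C) v"
  by (auto simp: dominated_def)

lemma legal_move_near_undominated:
  assumes "w \<in> V" "\<not> dominated C w" "y \<in> cnbhd V E w" "y \<notin> P" "y \<notin> B"
  shows "legal_move V E P B C y"
  using assms cnbhd_sym unfolding legal_move_def dominated_def by (auto simp: cnbhd_def)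

lemma ex_undominated:
  assumes "\<not> sepy_cond V E P B" "\<not> dom_cond1 V E C" "C = P \<or> C = B"
  shows "\<exists>w\<in>V. \<not> dominated C w"
  using assms by (auto simp: sepy_cond_def dom_cond1_def dominated_def)

lemma ex_legal_move:
  assumes nsepy: "\<not> sepy_cond V E P B" and "\<not> dom_cond1 V E C" and C: "C = P \<or> C = B"
  shows "\<exists>y. legal_move V E P B C y"
proof -
  obtain w where w: "w \<in> V" "\<not> dominated C w"
    using ex_undominated assms by blast
  have "\<not> cnbhd V E w \<subseteq> P" "\<not> cnbhd V E w \<subseteq> B"
    using nsepy w(1) by (auto simp: sepy_cond_def)
  then obtain y where "y \<in> cnbhd V E w" "y \<notin> P" "y \<notin> B"
    using w(2) C unfolding dominated_def by blast
  then show ?thesis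
    using legal_move_near_undominated w by blast
qed

definition matching :: "'a set \<Rightarrow> ('a \<Rightarrow> 'a) \<Rightarrow> bool" where
  "matching K q \<longleftrightarrow> K \<subseteq> V \<and> (\<forall>v\<in>K. q v \<in> K \<and> q (q v) = v \<and> E v (q v))"

lemma ex_maximum_matching:
  "\<exists>M mate. matching M mate \<and> (\<forall>K q. matching K q \<longrightarrow> card K \<le> card M)"
proof -
  let ?matchable = "\<lambda>K. \<exists>q. matching K q"
  have "?matchable {}"
    by (auto simp: matching_def)
  moreover have "\<forall>K. ?matchable K \<longrightarrow> card K < card V + 1"
    using finite_V by (auto simp: matching_def intro: card_mono le_imp_less_Suc)
  ultimately obtain M where "?matchable M" "\<forall>K. ?matchable K \<longrightarrow> card K \<le> card M"
    using ex_has_greatest_nat[of ?matchable "{}" card "card V + 1"] by blast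
  then show ?thesis
    by blast
qed

end

locale maximum_matching = finite_graph +
  fixes M :: "'a set" and mate :: "'a \<Rightarrow> 'a"
  assumes matching_M: "matching M mate"
    and maximum: "\<And>K q. matching K q \<Longrightarrow> card K \<le> card M"
begin

lemma matched_in_V: "v \<in> M \<Longrightarrow> v \<in> V"
  and mate_matched: "v \<in> M \<Longrightarrow> mate v \<in> M"
  and mate_mate: "v \<in> M \<Longrightarrow> mate (mate v) = v"
  and edge_mate: "v \<in> M \<Longrightarrow> E v (mate v)"
  using matching_M by (auto simp: matching_def)

lemma mate_neq: "v \<in> M \<Longrightarrow> mate v \<noteq> v"
  using edge_mate edge_irrefl by metis

lemma mate_eq_mate_iff: "v \<in> M \<Longrightarrow> w \<in> M \<Longrightarrow> mate v = mate w \<longleftrightarrow> v = w"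
  using mate_mate by metis

lemma no_larger_matching:
  assumes "matching (insert x (insert y M)) q" "x \<notin> M" "y \<notin> M" "x \<noteq> y"
  shows False
proof -
  have "finite M"
    using matched_in_V finite_V by (meson finite_subset subsetI)
  then have "card (insert x (insert y M)) = card M + 2"
    using assms by simp
  then show False
    using maximum[OF assms(1)] by simp
qed

lemma unmatched_not_adjacent:
  assumes "x \<notin> M" "y \<notin> M"
  shows "\<not> E x y"
proof
  assume xy: "E x y"
  then have "x \<noteq> y"
    using edge_irrefl by metis
  have "matching (insert x (insert y M)) (mate(x := y, y := x))"
    using assms xy \<open>x \<noteq> y\<close> edge_in_V edge_sym matching_M
    by (auto simp: matching_def)
  then show False
    using no_larger_matching assms \<open>x \<noteq> y\<close> by blast
qed

lemma no_augmenting_path3: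
  assumes a: "a \<in> M" and u: "u \<notin> M" "E a u" and u': "u' \<notin> M" "E (mate a) u'"
  shows "u = u'"
proof (rule ccontr)
  assume "u \<noteq> u'"
  let ?K = "insert u (insert u' M)"
  let ?q = "mate(a := u, u := a, mate a := u', u' := mate a)"
  have distinct: "a \<noteq> u" "a \<noteq> u'" "mate a \<noteq> u" "mate a \<noteq> u'" "mate a \<noteq> a"
    using a u u' mate_matched mate_neq by auto
  have "?q v \<in> ?K \<and> ?q (?q v) = v \<and> E v (?q v)" if v: "v \<in> ?K" for v
  proof -
    consider "v = a" | "v = mate a" | "v = u" | "v = u'" | "v \<in> M" "v \<noteq> a" "v \<noteq> mate a"
      using v by blast
    then show ?thesis
    proof cases
      case 5
      then have "mate v \<noteq> a" "mate v \<noteq> mate a" "mate v \<in> M"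
        using mate_mate a mate_matched by metis+
      then show ?thesis
        using 5 u u' mate_mate edge_mate by auto
    qed (use distinct \<open>u \<noteq> u'\<close> a u u' mate_mate mate_matched edge_sym in auto)
  qed
  then have "matching ?K ?q"
    using u u' edge_in_V matched_in_V by (auto simp: matching_def)
  then show False
    using no_larger_matching u u' \<open>u \<noteq> u'\<close> by blast
qed

end

locale dom_strategy = maximum_matching +
  assumes no_isolated: "\<And>v. v \<in> V \<Longrightarrow> \<exists>u. E v u"
begin

text \<open>The last clause is what lets Dom play next to an undominated unmatched vertex: its
  neighbours are matched, since M is maximum, and by this clause none of its uncoloured neighbours
  has a purple partner.\<close>

definition strategy_inv :: "'a set \<Rightarrow> 'a set \<Rightarrow> bool" where
  "strategy_inv P B \<longleftrightarrow> P \<subseteq> V \<and> B \<subseteq> V \<and> P \<inter> B = {} \<and>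
    (\<forall>v\<in>M. v \<in> P \<longrightarrow> mate v \<notin> P) \<and>
    (\<forall>v\<in>M. v \<in> B \<longrightarrow> mate v \<notin> P \<longrightarrow> dominated P v \<and> dominated P (mate v)) \<and>
    (\<forall>u\<in>V - M. u \<in> B \<longrightarrow> dominated P u) \<and>
    (\<forall>u\<in>V - M. u \<in> P \<longrightarrow> (\<exists>w\<in>B. E u w)) \<and>
    (\<forall>v\<in>M. v \<in> P \<longrightarrow> mate v \<notin> P \<union> B \<longrightarrow>
       (\<forall>u\<in>V - M. E (mate v) u \<longrightarrow> dominated P u))"

lemma strategy_invI:
  assumes "P \<subseteq> V" "B \<subseteq> V" "P \<inter> B = {}"
    and "\<And>v. v \<in> M \<Longrightarrow> v \<in> P \<Longrightarrow> mate v \<notin> P"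
    and "\<And>v. v \<in> M \<Longrightarrow> v \<in> B \<Longrightarrow> mate v \<notin> P \<Longrightarrow> dominated P v \<and> dominated P (mate v)"
    and "\<And>u. u \<in> V \<Longrightarrow> u \<notin> M \<Longrightarrow> u \<in> B \<Longrightarrow> dominated P u"
    and "\<And>u. u \<in> V \<Longrightarrow> u \<notin> M \<Longrightarrow> u \<in> P \<Longrightarrow> \<exists>w\<in>B. E u w"
    and "\<And>v u. v \<in> M \<Longrightarrow> v \<in> P \<Longrightarrow> mate v \<notin> P \<union> B \<Longrightarrow>
      u \<in> V \<Longrightarrow> u \<notin> M \<Longrightarrow> E (mate v) u \<Longrightarrow> dominated P u"
  shows "strategy_inv P B"
  unfolding strategy_inv_def using assms by (intro conjI ballI impI allI) (simp_all add: Un_iff)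

context
  fixes P B
  assumes inv: "strategy_inv P B"
begin

lemma purple_in_V: "P \<subseteq> V"
  and blue_in_V: "B \<subseteq> V"
  and purple_blue_disjoint: "P \<inter> B = {}"
  and matched_purple: "v \<in> M \<Longrightarrow> v \<in> P \<Longrightarrow> mate v \<notin> P"
  and matched_blue: "v \<in> M \<Longrightarrow> v \<in> B \<Longrightarrow> mate v \<notin> P \<Longrightarrow> dominated P v \<and> dominated P (mate v)"
  and unmatched_blue: "u \<in> V \<Longrightarrow> u \<notin> M \<Longrightarrow> u \<in> B \<Longrightarrow> dominated P u"
  and unmatched_purple: "u \<in> V \<Longrightarrow> u \<notin> M \<Longrightarrow> u \<in> P \<Longrightarrow> \<exists>w\<in>B. E u w"
  and half_purple_edge: "v \<in> M \<Longrightarrow> v \<in> P \<Longrightarrow> mate v \<notin> P \<union> B \<Longrightarrow>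
      u \<in> V \<Longrightarrow> u \<notin> M \<Longrightarrow> E (mate v) u \<Longrightarrow> dominated P u"
  using inv unfolding strategy_inv_def by simp_all

end


lemma strategy_inv_empty: "strategy_inv {} {}"
  by (rule strategy_invI) auto

lemma strategy_inv_not_purple_cnbhd:
  assumes inv: "strategy_inv P B" and v: "v \<in> V"
  shows "\<not> cnbhd V E v \<subseteq> P"
proof
  assume purple: "cnbhd V E v \<subseteq> P"
  then have "v \<in> P"
    using self_in_cnbhd v by blast
  show False
  proof (cases "v \<in> M")
    case True
    then have "mate v \<in> P"
      using purple nbr_in_cnbhd edge_mate by blast
    then show False
      using matched_purple[OF inv True \<open>v \<in> P\<close>] by blast
  next
    case False
    then obtain w where "w \<in> B" "E v w"
      using unmatched_purple[OF inv v] \<open>v \<in> P\<close> by blast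
    then show False
      using purple purple_blue_disjoint[OF inv] nbr_in_cnbhd by blast
  qed
qed

lemma strategy_inv_not_blue_cnbhd:
  assumes inv: "strategy_inv P B" and v: "v \<in> V"
  shows "\<not> cnbhd V E v \<subseteq> B"
proof
  assume blue: "cnbhd V E v \<subseteq> B"
  then have "v \<in> B"
    using self_in_cnbhd v by blast
  have "dominated P v"
  proof (cases "v \<in> M")
    case True
    then have "mate v \<notin> P"
      using blue purple_blue_disjoint[OF inv] nbr_in_cnbhd edge_mate by blast
    then show ?thesis
      using matched_blue[OF inv True \<open>v \<in> B\<close>] by blast
  next
    case False
    then show ?thesis
      using unmatched_blue[OF inv v] \<open>v \<in> B\<close> by blast
  qed
  then show False
    using blue purple_blue_disjoint[OF inv] unfolding dominated_def by blast
qed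

lemma strategy_inv_not_sepy_cond:
  assumes "strategy_inv P B"
  shows "\<not> sepy_cond V E P B"
  using strategy_inv_not_purple_cnbhd[OF assms] strategy_inv_not_blue_cnbhd[OF assms]
  by (auto simp: sepy_cond_def)

lemma strategy_inv_insert_purple:
  assumes inv: "strategy_inv P B" and y: "y \<in> V" "y \<notin> P" "y \<notin> B"
    and mate_y: "y \<in> M \<Longrightarrow> mate y \<notin> P"
    and unmatched_y: "y \<notin> M \<Longrightarrow> \<exists>w\<in>B. E y w"
    and mate_nbrs: "\<And>u. y \<in> M \<Longrightarrow> mate y \<notin> B \<Longrightarrow> u \<in> V \<Longrightarrow> u \<notin> M \<Longrightarrow> E (mate y) u \<Longrightarrow>
      dominated (insert y P) u"
  shows "strategy_inv (insert y P) B"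
proof (rule strategy_invI)
  show "insert y P \<subseteq> V" "B \<subseteq> V" "insert y P \<inter> B = {}"
    using purple_in_V[OF inv] blue_in_V[OF inv] purple_blue_disjoint[OF inv] y by auto
  show "mate v \<notin> insert y P" if "v \<in> M" "v \<in> insert y P" for v
  proof (cases "v = y")
    case False
    then have "v \<in> P" "mate v \<noteq> y"
      using that mate_y mate_mate mate_matched by auto
    then show ?thesis
      using that matched_purple[OF inv] by simp
  qed (use that mate_y mate_neq in auto)
  show "dominated (insert y P) v \<and> dominated (insert y P) (mate v)"
    if "v \<in> M" "v \<in> B" "mate v \<notin> insert y P" for v
    using that matched_blue[OF inv] dominated_insert by simp
  show "dominated (insert y P) u" if "u \<in> V" "u \<notin> M" "u \<in> B" for u
    using that unmatched_blue[OF inv] dominated_insert by simp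
  show "\<exists>w\<in>B. E u w" if "u \<in> V" "u \<notin> M" "u \<in> insert y P" for u
    using that unmatched_purple[OF inv] unmatched_y by auto
  show "dominated (insert y P) u"
    if "v \<in> M" "v \<in> insert y P" "mate v \<notin> insert y P \<union> B"
      "u \<in> V" "u \<notin> M" "E (mate v) u" for v u
    using that half_purple_edge[OF inv] mate_nbrs dominated_insert by auto
qed

lemma strategy_inv_insert_blue:
  assumes inv: "strategy_inv P B" and x: "x \<in> V" "x \<notin> P"
    and matched_x: "x \<in> M \<Longrightarrow> mate x \<notin> P \<Longrightarrow> dominated P x \<and> dominated P (mate x)"
    and unmatched_x: "x \<notin> M \<Longrightarrow> dominated P x"
  shows "strategy_inv P (insert x B)"
proof (rule strategy_invI)
  show "P \<subseteq> V" "insert x B \<subseteq> V" "P \<inter> insert x B = {}"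
    using purple_in_V[OF inv] blue_in_V[OF inv] purple_blue_disjoint[OF inv] x by auto
  show "mate v \<notin> P" if "v \<in> M" "v \<in> P" for v
    using that matched_purple[OF inv] by simp
  show "dominated P v \<and> dominated P (mate v)" if "v \<in> M" "v \<in> insert x B" "mate v \<notin> P" for v
    using that matched_blue[OF inv] matched_x by auto
  show "dominated P u" if "u \<in> V" "u \<notin> M" "u \<in> insert x B" for u
    using that unmatched_blue[OF inv] unmatched_x by auto
  show "\<exists>w\<in>insert x B. E u w" if "u \<in> V" "u \<notin> M" "u \<in> P" for u
    using that unmatched_purple[OF inv] by blast
  show "dominated P u"
    if "v \<in> M" "v \<in> P" "mate v \<notin> P \<union> insert x B" "u \<in> V" "u \<notin> M" "E (mate v) u" for v u
    using that half_purple_edge[OF inv] by simp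
qed

lemma strategy_inv_insert_matched_edge:
  assumes inv: "strategy_inv P B" and x: "x \<in> M" "x \<notin> P" and p: "mate x \<notin> P" "mate x \<notin> B"
  shows "strategy_inv (insert (mate x) P) (insert x B)"
proof (rule strategy_invI)
  show "insert (mate x) P \<subseteq> V" "insert x B \<subseteq> V" "insert (mate x) P \<inter> insert x B = {}"
    using purple_in_V[OF inv] blue_in_V[OF inv] purple_blue_disjoint[OF inv] x p
      matched_in_V mate_matched mate_neq by auto
  show "mate v \<notin> insert (mate x) P" if "v \<in> M" "v \<in> insert (mate x) P" for v
  proof (cases "v = mate x")
    case False
    then have "v \<in> P" "mate v \<noteq> mate x"
      using that x mate_eq_mate_iff by auto
    then show ?thesis
      using that matched_purple[OF inv] by simp
  qed (use that x mate_mate not_sym[OF mate_neq[OF x(1)]] in auto)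
  show "dominated (insert (mate x) P) v \<and> dominated (insert (mate x) P) (mate v)"
    if "v \<in> M" "v \<in> insert x B" "mate v \<notin> insert (mate x) P" for v
    using that matched_blue[OF inv] dominated_insert by auto
  show "dominated (insert (mate x) P) u" if "u \<in> V" "u \<notin> M" "u \<in> insert x B" for u
    using that x unmatched_blue[OF inv] dominated_insert by auto
  show "\<exists>w\<in>insert x B. E u w" if "u \<in> V" "u \<notin> M" "u \<in> insert (mate x) P" for u
    using that x mate_matched unmatched_purple[OF inv] by blast
  show "dominated (insert (mate x) P) u"
    if "v \<in> M" "v \<in> insert (mate x) P" "mate v \<notin> insert (mate x) P \<union> insert x B"
      "u \<in> V" "u \<notin> M" "E (mate v) u" for v u
  proof -
    have "v \<noteq> mate x"
      using that x mate_mate by auto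
    then show ?thesis
      using that half_purple_edge[OF inv] dominated_insert by auto
  qed
qed


lemma strategy_inv_insert_nbr_of_unmatched:
  assumes inv: "strategy_inv P B" and w: "w \<in> V" "w \<notin> M" "\<not> dominated P w"
    and y: "E w y" "y \<notin> B"
  shows "strategy_inv (insert y P) B"
proof (rule strategy_inv_insert_purple[OF inv])
  have "y \<in> M"
    using unmatched_not_adjacent w(2) y(1) by blast
  show "y \<in> V" "y \<notin> B"
    using edge_in_V y by auto
  show "y \<notin> P"
    using w(3) y(1) dominated_if_edge by blast
  show "mate y \<notin> P"
  proof
    assume "mate y \<in> P"
    moreover have "mate (mate y) \<notin> P \<union> B"
      using mate_mate \<open>y \<in> M\<close> \<open>y \<notin> P\<close> y(2) by simp
    ultimately have "dominated P w"
      using half_purple_edge[OF inv, of "mate y" w] mate_matched mate_mate \<open>y \<in> M\<close> w y(1) edge_sym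
      by simp
    then show False
      using w(3) by blast
  qed
  show "\<exists>w\<in>B. E y w" if "y \<notin> M"
    using that \<open>y \<in> M\<close> by blast
  show "dominated (insert y P) u" if "u \<in> V" "u \<notin> M" "E (mate y) u" for u
  proof -
    have "u = w"
      using no_augmenting_path3[OF \<open>y \<in> M\<close>] w(2) y(1) edge_sym that by metis
    then show ?thesis
      using y(1) dominated_if_edge by blast
  qed
qed

lemma strategy_move_near_unmatched:
  assumes inv: "strategy_inv P B" and w: "w \<in> V" "w \<notin> M" "w \<notin> B" "\<not> dominated P w"
  shows "\<exists>y\<in>cnbhd V E w. y \<notin> B \<and> strategy_inv (insert y P) B"
proof (cases "\<exists>y. E w y \<and> y \<notin> B")
  case True
  then show ?thesis
    using strategy_inv_insert_nbr_of_unmatched[OF inv w(1,2,4)] nbr_in_cnbhd by blast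
next
  case False
  have "strategy_inv (insert w P) B"
  proof (rule strategy_inv_insert_purple[OF inv w(1) _ w(3)])
    show "w \<notin> P"
      using w(1,4) self_in_cnbhd unfolding dominated_def by blast
    show "\<exists>u\<in>B. E w u"
      using False no_isolated w(1) by blast
  qed (use w(2) in auto)
  then show ?thesis
    using self_in_cnbhd w(1,3) by blast
qed

text \<open>Here w has no unmatched neighbour u at all, as u, w, mate w, u0 would be an augmenting path.\<close>

lemma strategy_inv_insert_mate:
  assumes inv: "strategy_inv P B" and w: "w \<in> M" "w \<notin> P" "mate w \<notin> P" "mate w \<notin> B"
    and u0: "u0 \<notin> M" "E (mate w) u0" "\<not> E w u0"
  shows "strategy_inv (insert (mate w) P) B"
proof (rule strategy_inv_insert_purple[OF inv])
  show "mate w \<in> V"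
    using matched_in_V mate_matched w(1) by blast
  show "mate (mate w) \<notin> P"
    using mate_mate[OF w(1)] w(2) by simp
  show "mate w \<notin> P" "mate w \<notin> B"
    by (fact w)+
  show "\<exists>u\<in>B. E (mate w) u" if "mate w \<notin> M"
    using that w(1) mate_matched by blast
  show "dominated (insert (mate w) P) u" if "u \<notin> M" "E (mate (mate w)) u" for u
  proof -
    have "E w u"
      using that(2) mate_mate[OF w(1)] by simp
    then have "u = u0"
      using no_augmenting_path3[OF w(1) that(1) _ u0(1,2)] by blast
    then show ?thesis
      using \<open>E w u\<close> u0(3) by blast
  qed
qed

lemma strategy_move_near_matched:
  assumes inv: "strategy_inv P B" and w: "w \<in> M" "w \<notin> B" "\<not> dominated P w"
  shows "\<exists>y\<in>cnbhd V E w. y \<notin> B \<and> strategy_inv (insert y P) B"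
proof -
  have "w \<in> V"
    using matched_in_V w(1) by blast
  have "w \<notin> P" "mate w \<notin> P"
    using w(3) self_in_cnbhd[OF \<open>w \<in> V\<close>] dominated_if_edge[OF edge_mate[OF w(1)]]
    unfolding dominated_def by blast+
  show ?thesis
  proof (cases "mate w \<notin> B \<and> (\<exists>u\<in>V. u \<notin> M \<and> E (mate w) u \<and> \<not> E w u)")
    case True
    then have "strategy_inv (insert (mate w) P) B"
      using strategy_inv_insert_mate[OF inv w(1) \<open>w \<notin> P\<close> \<open>mate w \<notin> P\<close>] by blast
    then show ?thesis
      using nbr_in_cnbhd[OF edge_mate[OF w(1)]] True by blast
  next
    case False
    have "strategy_inv (insert w P) B"
    proof (rule strategy_inv_insert_purple[OF inv \<open>w \<in> V\<close> \<open>w \<notin> P\<close> w(2)])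
      show "dominated (insert w P) u" if "mate w \<notin> B" "u \<in> V" "u \<notin> M" "E (mate w) u" for u
      proof -
        have "E u w"
          using that False edge_sym by blast
        then show ?thesis
          using dominated_if_edge by blast
      qed
    qed (use w(1) \<open>mate w \<notin> P\<close> in simp_all)
    then show ?thesis
      using self_in_cnbhd \<open>w \<in> V\<close> w(2) by blast
  qed
qed

lemma strategy_move_at_undominated:
  assumes inv: "strategy_inv P B" and w: "w \<in> V" "\<not> dominated P w"
  shows "\<exists>y. legal_move V E P B P y \<and> strategy_inv (insert y P) B"
proof -
  have "w \<notin> B"
  proof
    assume "w \<in> B"
    show False
    proof (cases "w \<in> M")
      case True
      then have "mate w \<notin> P"
        using w(2) edge_mate dominated_if_edge by blast
      then show False
        using matched_blue[OF inv True \<open>w \<in> B\<close>] w(2) by blast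
    next
      case False
      then show False
        using unmatched_blue[OF inv w(1) False \<open>w \<in> B\<close>] w(2) by blast
    qed
  qed
  then obtain y where y: "y \<in> cnbhd V E w" "y \<notin> B" "strategy_inv (insert y P) B"
    using strategy_move_near_unmatched[OF inv w(1)] strategy_move_near_matched[OF inv] w
    by blast
  moreover have "y \<notin> P"
    using y(1) w(2) unfolding dominated_def by blast
  ultimately show ?thesis
    using legal_move_near_undominated[OF w] by blast
qed


lemma legal_move_has_nbr_outside:
  assumes "legal_move V E P B C x"
  shows "\<exists>y. E x y \<and> y \<notin> C"
proof -
  obtain q where "q \<in> cnbhd V E x" "cnbhd V E q \<inter> C = {}"
    using assms by (auto simp: legal_move_def)
  moreover obtain z where "E x z"
    using assms no_isolated by (auto simp: legal_move_def)
  ultimately show ?thesis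
    using edge_in_V by (auto simp: cnbhd_def)
qed

lemma strategy_reply_near_unmatched:
  assumes inv: "strategy_inv P B" and x: "x \<in> V" "x \<notin> P" "x \<notin> M" "\<not> dominated P x"
    and y: "E x y" "y \<notin> B"
  shows "legal_move V E P (insert x B) P y \<and> strategy_inv (insert y P) (insert x B)"
proof
  have "y \<notin> P" "y \<noteq> x"
    using y(1) x(4) dominated_if_edge edge_irrefl by blast+
  then show "legal_move V E P (insert x B) P y"
    using legal_move_near_undominated[OF x(1,4) nbr_in_cnbhd[OF y(1)]] y(2) by blast
  show "strategy_inv (insert y P) (insert x B)"
    using strategy_inv_insert_blue
      [OF strategy_inv_insert_nbr_of_unmatched[OF inv x(1,3,4) y] x(1)]
      x(2,3) \<open>y \<noteq> x\<close> dominated_if_edge[OF y(1)] by blast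
qed

lemma matched_dominated_if_mate_unplayable:
  assumes inv: "strategy_inv P B" and x: "x \<in> M" "x \<notin> P" "x \<notin> B" "mate x \<notin> P"
    and unplayable: "mate x \<in> B \<or> \<not> legal_move V E P (insert x B) P (mate x)"
  shows "dominated P x \<and> dominated P (mate x)"
proof (cases "mate x \<in> B")
  case True
  then show ?thesis
    using matched_blue[OF inv mate_matched[OF x(1)]] mate_mate x by auto
next
  case False
  then have "\<forall>u\<in>cnbhd V E (mate x). dominated P u"
    using unplayable x mate_neq matched_in_V mate_matched
    unfolding legal_move_def dominated_def by auto
  moreover have "x \<in> cnbhd V E (mate x)" "mate x \<in> cnbhd V E (mate x)"
    using x(1) edge_mate edge_sym nbr_in_cnbhd self_in_cnbhd matched_in_V mate_matched
    by blast+
  ultimately show ?thesis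
    by blast
qed

lemma strategy_reply:
  assumes inv: "strategy_inv P B" and x: "legal_move V E P B B x"
  shows "strategy_inv P (insert x B) \<or>
    (\<exists>y. legal_move V E P (insert x B) P y \<and> strategy_inv (insert y P) (insert x B))"
proof -
  have xV: "x \<in> V" "x \<notin> P" "x \<notin> B"
    using x by (auto simp: legal_move_def)
  consider (answer_mate) "x \<in> M" "mate x \<notin> P" "mate x \<notin> B"
      "legal_move V E P (insert x B) P (mate x)"
    | (answer_nbr) "x \<notin> M" "\<not> dominated P x"
    | (no_answer) "x \<in> M \<Longrightarrow> mate x \<notin> P \<Longrightarrow>
        mate x \<in> B \<or> \<not> legal_move V E P (insert x B) P (mate x)"
      "x \<notin> M \<Longrightarrow> dominated P x"
    by blast
  then show ?thesis
  proof cases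
    case answer_mate
    then show ?thesis
      using strategy_inv_insert_matched_edge[OF inv answer_mate(1) xV(2)] by blast
  next
    case answer_nbr
    then show ?thesis
      using legal_move_has_nbr_outside[OF x] strategy_reply_near_unmatched[OF inv xV(1,2)]
      by blast
  next
    case no_answer
    then show ?thesis
      using strategy_inv_insert_blue[OF inv xV(1,2)]
        matched_dominated_if_mate_unplayable[OF inv _ xV(2,3)] by blast
  qed
qed

lemma card_uncoloured_less:
  assumes "y \<in> V" "y \<notin> P \<union> B" "P \<union> B \<subseteq> P' \<union> B'" "y \<in> P' \<union> B'"
  shows "card (V - (P' \<union> B')) < card (V - (P \<union> B))"
  using assms finite_V by (intro psubset_card_mono) auto

lemma dom_forces_by_move:
  assumes inv: "strategy_inv (insert y P) B" and y: "legal_move V E P B P y"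
    and next_pos: "dom_forces V E False (insert y P) B"
  shows "dom_forces V E True P B"
proof -
  have no_sepy: "\<not> sepy_cond V E P B"
    using strategy_inv_not_sepy_cond[OF inv] sepy_cond_mono[of V E P B "insert y P"] by blast
  show ?thesis
  proof (cases "dom_cond V E P B")
    case False
    show ?thesis
      using dom_forces.dom_move[OF no_sepy False y next_pos] .
  qed (use dom_forces.terminal no_sepy in blast)
qed

lemma dom_forces_if_strategy_inv:
  assumes "strategy_inv P B"
  shows "dom_forces V E d P B"
  using assms
proof (induction "card (V - (P \<union> B))" arbitrary: d P B rule: less_induct)
  case less
  note inv = less.prems and IH = less.hyps
  have no_sepy: "\<not> sepy_cond V E P B"
    using strategy_inv_not_sepy_cond[OF inv] .
  have dom_turn: "dom_forces V E True P B"
  proof (cases "dom_cond V E P B")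
    case False
    then obtain w where "w \<in> V" "\<not> dominated P w"
      using ex_undominated[OF no_sepy, of P] by (auto simp: dom_cond_def)
    then obtain y where y: "legal_move V E P B P y" and inv': "strategy_inv (insert y P) B"
      using strategy_move_at_undominated[OF inv] by blast
    have "card (V - (insert y P \<union> B)) < card (V - (P \<union> B))"
      using y by (intro card_uncoloured_less) (auto simp: legal_move_def)
    then show ?thesis
      using dom_forces_by_move[OF inv' y] IH inv' by blast
  qed (use dom_forces.terminal no_sepy in blast)
  have reply: "dom_forces V E True P (insert x B)" if x: "legal_move V E P B B x" for x
  proof -
    have x_new: "x \<in> V" "x \<notin> P \<union> B"
      using x by (auto simp: legal_move_def)
    have fewer: "card (V - (P' \<union> insert x B)) < card (V - (P \<union> B))" if "P \<subseteq> P'" for P'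
      using that by (intro card_uncoloured_less[OF x_new]) auto
    from strategy_reply[OF inv x] show ?thesis
    proof
      assume "strategy_inv P (insert x B)"
      then show ?thesis
        using IH fewer by blast
    next
      assume "\<exists>y. legal_move V E P (insert x B) P y \<and> strategy_inv (insert y P) (insert x B)"
      then obtain y where y: "legal_move V E P (insert x B) P y"
        and inv': "strategy_inv (insert y P) (insert x B)" by blast
      then show ?thesis
        using dom_forces_by_move[OF inv' y] IH fewer[of "insert y P"] by blast
    qed
  qed
  have sepy_turn: "dom_forces V E False P B"
  proof (cases "dom_cond V E P B")
    case False
    then have "\<exists>x. legal_move V E P B B x"
      using ex_legal_move[OF no_sepy, of B] by (simp add: dom_cond_def)
    then show ?thesis
      using dom_forces.sepy_move[OF no_sepy False] reply by blast
  qed (use dom_forces.terminal no_sepy in blast)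
  show ?case
    using dom_turn sepy_turn by (cases d) simp_all
qed

end

theorem theorem12:
  fixes V :: "'a set" and E :: "'a \<Rightarrow> 'a \<Rightarrow> bool"
  assumes "finite V"
    and "\<And>u v. E u v \<Longrightarrow> u \<in> V \<and> v \<in> V"
    and "\<And>u v. E u v \<Longrightarrow> E v u"
    and "\<And>v. \<not> E v v"
    and "\<And>v. v \<in> V \<Longrightarrow> \<exists>u. E v u"
  shows "dom_forces V E True {} {} \<and> dom_forces V E False {} {}"
proof -
  interpret finite_graph V E
    using assms by unfold_locales
  obtain M mate where "matching M mate" "\<And>K q. matching K q \<Longrightarrow> card K \<le> card M"
    using ex_maximum_matching by blast
  then interpret dom_strategy V E M mate
    using assms by unfold_locales
  show ?thesis
    using dom_forces_if_strategy_inv[OF strategy_inv_empty] by blast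
qed

end
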